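(* For every $n\ge1$, the reflexive complete graph $K^n$ is fibrant in the Matsushita model structure on $\mathbf{Gr}$ (and hence, regarded as a loop graph with all vertices looped, in the Matsushita model structure on $\mathbf{Gr}_\ell$); that is, $\mathrm{Ex}^2\mathrm{Sing}\,\mathrm{C}\ell(K^n)$ is a Kan complex.
   Context: A simplicial complex consists of a vertex set and a collection of nonempty finite subsets (simplices) containing all singletons and closed under nonempty subsets; maps are vertex functions preserving simplices; $\mathbf{Cpx}$ is the category. $\mathbf{Gr}$ (reflexive graphs) is the full subcategory of complexes whose simplices have at most two elements; $K^n$ is the reflexive graph on $n$ vertices with all edges. $\mathrm{C}\ell:\mathbf{Gr}\to\mathbf{Cpx}$ is the clique complex functor. $\mathbf{\Delta}^n$ is the complex on $\{0,\dots,n\}$ with all nonempty subsets simplices, $\mathrm{Sing}(K)_n=\mathbf{Cpx}(\mathbf{\Delta}^n,K)$, $\mathrm{Ex}$ is the right adjoint of barycentric subdivision. In the Matsushita model structure on $\mathbf{Gr}$ a map $f$ is a fibration iff $\mathrm{Ex}^2\mathrm{Sing}\,\mathrm{C}\ell(f)$ is a Kan fibration. Loop graphs are sets with a symmetric relation; in the Matsushita model structure on loop graphs a map $f$ is a fibration iff its restriction $f^\circ$ to maximal reflexive subgraphs (induced on looped vertices) is a Matsushita fibration in $\mathbf{Gr}$. *)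

theory Defs
  imports Main
begin

record 'v cpx =
  verts :: "'v set"
  simps :: "'v set set"

definition is_cpx :: "'v cpx \<Rightarrow> bool" where
  "is_cpx K \<longleftrightarrow>
     (\<forall>\<sigma>\<in>simps K. \<sigma> \<noteq> {} \<and> finite \<sigma> \<and> \<sigma> \<subseteq> verts K) \<and>
     (\<forall>v\<in>verts K. {v} \<in> simps K) \<and>
     (\<forall>\<sigma>\<in>simps K. \<forall>\<tau>. \<tau> \<noteq> {} \<and> \<tau> \<subseteq> \<sigma> \<longrightarrow> \<tau> \<in> simps K)"

definition cpx_hom :: "'v cpx \<Rightarrow> 'w cpx \<Rightarrow> ('v \<Rightarrow> 'w) \<Rightarrow> bool" where
  "cpx_hom K L f \<longleftrightarrow> (\<forall>v\<in>verts K. f v \<in> verts L) \<and> (\<forall>\<sigma>\<in>simps K. f ` \<sigma> \<in> simps L)"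

definition is_rgraph :: "'v cpx \<Rightarrow> bool" where
  "is_rgraph G \<longleftrightarrow> is_cpx G \<and> (\<forall>\<sigma>\<in>simps G. card \<sigma> \<le> 2)"

definition Kgraph :: "nat \<Rightarrow> nat cpx" where
  "Kgraph n = \<lparr> verts = {0..<n},
                simps = {\<sigma>. \<sigma> \<noteq> {} \<and> \<sigma> \<subseteq> {0..<n} \<and> card \<sigma> \<le> 2} \<rparr>"

definition clique :: "'v cpx \<Rightarrow> 'v cpx" where
  "clique G = \<lparr> verts = verts G,
                simps = {\<sigma>. \<sigma> \<noteq> {} \<and> finite \<sigma> \<and> \<sigma> \<subseteq> verts G \<and>
                             (\<forall>x\<in>\<sigma>. \<forall>y\<in>\<sigma>. {x, y} \<in> simps G)} \<rparr>"

definition cpxDelta :: "nat \<Rightarrow> nat cpx" where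
  "cpxDelta m = \<lparr> verts = {0..m}, simps = {\<sigma>. \<sigma> \<noteq> {} \<and> \<sigma> \<subseteq> {0..m}} \<rparr>"

text \<open>A monotone map [m] \<rightarrow> [n] of the simplex category, represented by a
  function nat \<Rightarrow> nat (only the values on {0..m} matter).\<close>
definition simp_op :: "nat \<Rightarrow> nat \<Rightarrow> (nat \<Rightarrow> nat) \<Rightarrow> bool" where
  "simp_op m n \<theta> \<longleftrightarrow> (\<forall>i\<le>m. \<theta> i \<le> n) \<and> (\<forall>i j. i \<le> j \<and> j \<le> m \<longrightarrow> \<theta> i \<le> \<theta> j)"

text \<open>cells X n is the set of n-simplices; act X m n \<theta> is \<theta>^* : X_n \<rightarrow> X_m.\<close>
record 'a sset =
  cells :: "nat \<Rightarrow> 'a set"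
  act :: "nat \<Rightarrow> nat \<Rightarrow> (nat \<Rightarrow> nat) \<Rightarrow> 'a \<Rightarrow> 'a"

definition is_sset :: "'a sset \<Rightarrow> bool" where
  "is_sset X \<longleftrightarrow>
    (\<forall>m n \<theta> x. simp_op m n \<theta> \<and> x \<in> cells X n \<longrightarrow> act X m n \<theta> x \<in> cells X m) \<and>
    (\<forall>n x. x \<in> cells X n \<longrightarrow> act X n n (\<lambda>i. i) x = x) \<and>
    (\<forall>l m n \<phi> \<theta> x. simp_op l m \<phi> \<and> simp_op m n \<theta> \<and> x \<in> cells X n \<longrightarrow>
        act X l m \<phi> (act X m n \<theta> x) = act X l n (\<theta> \<circ> \<phi>) x) \<and>
    (\<forall>m n \<theta> \<theta>' x. simp_op m n \<theta> \<and> (\<forall>i\<le>m. \<theta> i = \<theta>' i) \<and> x \<in> cells X n \<longrightarrow>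
        act X m n \<theta> x = act X m n \<theta>' x)"

definition sset_hom :: "'b sset \<Rightarrow> 'a sset \<Rightarrow> (nat \<Rightarrow> 'b \<Rightarrow> 'a) \<Rightarrow> bool" where
  "sset_hom A X f \<longleftrightarrow>
    (\<forall>n a. a \<in> cells A n \<longrightarrow> f n a \<in> cells X n) \<and>
    (\<forall>m n \<theta> a. simp_op m n \<theta> \<and> a \<in> cells A n \<longrightarrow> f m (act A m n \<theta> a) = act X m n \<theta> (f n a)) \<and>
    (\<forall>n a. a \<notin> cells A n \<longrightarrow> f n a = undefined)"

text \<open>Sing(K)_m = Cpx(\<Delta>^m, K) (maps normalised to be undefined off {0..m}).\<close>
definition Sing :: "'v cpx \<Rightarrow> (nat \<Rightarrow> 'v) sset" where
  "Sing K = \<lparr> cells = (\<lambda>m. {f. cpx_hom (cpxDelta m) K f \<and> (\<forall>i>m. f i = undefined)}),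
              act = (\<lambda>m n \<theta> f. (\<lambda>i. if i \<le> m then f (\<theta> i) else undefined)) \<rparr>"

text \<open>Barycentric subdivision of \<Delta>[n]: the nerve of the poset of nonempty
  subsets of {0..n}; a k-simplex is a chain c 0 \<subseteq> ... \<subseteq> c k
  (normalised to {} beyond k).\<close>
definition sdDelta :: "nat \<Rightarrow> (nat \<Rightarrow> nat set) sset" where
  "sdDelta n = \<lparr> cells = (\<lambda>k. {c. (\<forall>i\<le>k. c i \<noteq> {} \<and> c i \<subseteq> {0..n}) \<and>
                                    (\<forall>i j. i \<le> j \<and> j \<le> k \<longrightarrow> c i \<subseteq> c j) \<and>
                                    (\<forall>i>k. c i = {})}),
                 act = (\<lambda>k l \<phi> c. (\<lambda>i. if i \<le> k then c (\<phi> i) else {})) \<rparr>"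

definition sd_map :: "(nat \<Rightarrow> nat) \<Rightarrow> nat \<Rightarrow> (nat \<Rightarrow> nat set) \<Rightarrow> (nat \<Rightarrow> nat set)" where
  "sd_map \<theta> k c = (\<lambda>i. if i \<le> k then \<theta> ` c i else {})"

definition Ex :: "'a sset \<Rightarrow> (nat \<Rightarrow> (nat \<Rightarrow> nat set) \<Rightarrow> 'a) sset" where
  "Ex X = \<lparr> cells = (\<lambda>n. {f. sset_hom (sdDelta n) X f}),
            act = (\<lambda>m n \<theta> f. (\<lambda>k c. if c \<in> cells (sdDelta m) k then f k (sd_map \<theta> k c)
                                     else undefined)) \<rparr>"

definition coface :: "nat \<Rightarrow> nat \<Rightarrow> nat" where
  "coface i j = (if j < i then j else Suc j)"

definition face :: "'a sset \<Rightarrow> nat \<Rightarrow> nat \<Rightarrow> 'a \<Rightarrow> 'a" where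
  "face X n i x = act X (n - 1) n (coface i) x"

text \<open>Kan complex: every horn \<Lambda>^n_k \<rightarrow> X (given as a compatible family of
  n faces x_i, i \<noteq> k) extends to an n-simplex.\<close>
definition kan :: "'a sset \<Rightarrow> bool" where
  "kan X \<longleftrightarrow>
    (\<forall>n k x. 1 \<le> n \<and> k \<le> n \<and>
       (\<forall>i\<le>n. i \<noteq> k \<longrightarrow> x i \<in> cells X (n - 1)) \<and>
       (\<forall>i j. i < j \<and> j \<le> n \<and> i \<noteq> k \<and> j \<noteq> k \<longrightarrow>
            face X (n - 1) i (x j) = face X (n - 1) (j - 1) (x i))
     \<longrightarrow> (\<exists>y\<in>cells X n. \<forall>i\<le>n. i \<noteq> k \<longrightarrow> face X n i y = x i))"

end

theory Submission
  imports Defs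
begin

(*
  Sing of the full simplex on a vertex set V is the 0-coskeleton cosk0 V, whose m-simplices are
  arbitrary (m+1)-tuples in V. A map from sd^2 Delta[n] to cosk0 V is therefore the same as an
  arbitrary V-valued function on the vertices of sd^2 Delta[n], i.e. on the chains of nonempty
  subsets of {0..n}, and the face d_i acts by pushing chains forward along the coface map i.
  A horn Lambda^n_k prescribes these values on the chains lying in a face d_i with i different
  from k. A chain lying in two such faces d_i and d_j comes from their common codimension-2 face,
  where the compatibility conditions of the horn make the two prescriptions agree; extending the
  glued function arbitrarily gives a filler.
*)

definition cosk0 :: "'v set \<Rightarrow> (nat \<Rightarrow> 'v) sset" where
  "cosk0 V = \<lparr>cells = (\<lambda>m. {f. (\<forall>i\<le>m. f i \<in> V) \<and> (\<forall>i>m. f i = undefined)}),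
              act = (\<lambda>m n \<theta> f i. if i \<le> m then f (\<theta> i) else undefined)\<rparr>"

lemma cells_cosk0_iff:
  "f \<in> cells (cosk0 V) m \<longleftrightarrow> (\<forall>i\<le>m. f i \<in> V) \<and> (\<forall>i>m. f i = undefined)"
  by (simp add: cosk0_def)

lemma act_cosk0: "act (cosk0 V) m n \<theta> f = (\<lambda>i. if i \<le> m then f (\<theta> i) else undefined)"
  by (simp add: cosk0_def)

lemma Sing_clique_Kgraph: "Sing (clique (Kgraph N)) = cosk0 {0..<N}"
proof -
  have card_pair: "card {x, y} \<le> 2" for x y :: nat
    by (cases "x = y") auto
  have "cpx_hom (cpxDelta m) (clique (Kgraph N)) f \<longleftrightarrow> (\<forall>i\<le>m. f i < N)" for m f
    using card_pair finite_subset[of _ "{0..m}"]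
    by (auto simp: cpx_hom_def cpxDelta_def clique_def Kgraph_def)
  then show ?thesis
    by (simp add: Sing_def cosk0_def)
qed

lemma cells_sdDelta_iff:
  "c \<in> cells (sdDelta n) k \<longleftrightarrow>
     (\<forall>i\<le>k. c i \<noteq> {} \<and> c i \<subseteq> {0..n}) \<and> (\<forall>i j. i \<le> j \<and> j \<le> k \<longrightarrow> c i \<subseteq> c j) \<and>
     (\<forall>i>k. c i = {})"
  by (simp add: sdDelta_def)

lemma act_sdDelta: "act (sdDelta n) m k \<theta> c = (\<lambda>i. if i \<le> m then c (\<theta> i) else {})"
  by (simp add: sdDelta_def)

lemma sdDelta_mono: "c \<in> cells (sdDelta n) k \<Longrightarrow> i \<le> j \<Longrightarrow> j \<le> k \<Longrightarrow> c i \<subseteq> c j"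
  by (simp add: cells_sdDelta_iff)

lemma act_sdDelta_cells:
  "simp_op m k \<theta> \<Longrightarrow> c \<in> cells (sdDelta n) k \<Longrightarrow> act (sdDelta n) m k \<theta> c \<in> cells (sdDelta n) m"
  unfolding cells_sdDelta_iff act_sdDelta simp_op_def by auto

lemma sd_map_cells:
  assumes "\<forall>t\<le>m. \<theta> t \<le> n" and "c \<in> cells (sdDelta m) k"
  shows "sd_map \<theta> k c \<in> cells (sdDelta n) k"
  using assms unfolding cells_sdDelta_iff sd_map_def
  by (auto simp: image_mono) (metis atLeastAtMost_iff subsetD le0)

definition sd_vertex :: "nat set \<Rightarrow> nat \<Rightarrow> nat set" where
  "sd_vertex S = (\<lambda>t. if t = 0 then S else {})"

lemma sd_vertex_cells: "S \<noteq> {} \<Longrightarrow> S \<subseteq> {0..n} \<Longrightarrow> sd_vertex S \<in> cells (sdDelta n) 0"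
  unfolding cells_sdDelta_iff sd_vertex_def by auto

lemma sd_map_sd_vertex: "sd_map \<theta> 0 (sd_vertex T) = sd_vertex (\<theta> ` T)"
  unfolding sd_map_def sd_vertex_def by (rule ext) simp

lemma cells_Ex_iff: "f \<in> cells (Ex X) n \<longleftrightarrow> sset_hom (sdDelta n) X f"
  by (simp add: Ex_def)

lemma act_Ex:
  "act (Ex X) m n \<theta> f = (\<lambda>k c. if c \<in> cells (sdDelta m) k then f k (sd_map \<theta> k c) else undefined)"
  by (simp add: Ex_def)

lemma monotone_enumeration:
  assumes "S \<noteq> {}" and "S \<subseteq> {0..k}"
  obtains m \<theta> where "simp_op m k \<theta>" and "\<theta> ` {0..m} = S"
proof -
  define xs where "xs = sorted_list_of_set S"
  have "finite S"
    using assms(2) finite_subset by blast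
  then have set_xs: "set xs = S" and sorted: "sorted xs"
    by (simp_all add: xs_def)
  have "xs \<noteq> []"
    using set_xs assms(1) by auto
  define m where "m = length xs - 1"
  have range: "{0..m} = {..<length xs}"
    using \<open>xs \<noteq> []\<close> unfolding m_def by (cases xs) auto
  have image: "(\<lambda>t. xs ! t) ` {0..m} = S"
    unfolding range set_xs[symmetric] by (auto simp: set_conv_nth)
  have "simp_op m k (\<lambda>t. xs ! t)"
    unfolding simp_op_def
  proof (intro conjI allI impI)
    fix i assume "i \<le> m"
    then have "xs ! i \<in> (\<lambda>t. xs ! t) ` {0..m}"
      by simp
    then have "xs ! i \<in> S"
      unfolding image .
    then show "xs ! i \<le> k"
      using assms(2) by auto
  next
    fix i j assume ij: "i \<le> j \<and> j \<le> m"
    then have "j < length xs"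
      using range by (metis atLeastAtMost_iff lessThan_iff le0)
    with ij show "xs ! i \<le> xs ! j"
      using sorted_nth_mono[OF sorted] by simp
  qed
  then show thesis
    using image by (rule that)
qed

lemma sdDelta_factor_least:
  assumes a: "a \<in> cells (sdDelta n) m" and b: "b \<in> cells (sdDelta n) k"
    and sub: "a ` {0..m} \<subseteq> b ` {0..k}"
  defines "\<psi> \<equiv> \<lambda>t. LEAST s. b s = a t"
  shows "simp_op m k \<psi>" and "act (sdDelta n) m k \<psi> b = a"
proof -
  have hit: "b (\<psi> t) = a t \<and> \<psi> t \<le> k" if "t \<le> m" for t
  proof -
    have "a t \<in> b ` {0..k}"
      using sub that by auto
    then obtain s where "s \<le> k" and s: "b s = a t"
      by auto
    have "b (\<psi> t) = a t"
      unfolding \<psi>_def using s by (rule LeastI)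
    moreover have "\<psi> t \<le> s"
      unfolding \<psi>_def using s by (rule Least_le)
    ultimately show ?thesis
      using \<open>s \<le> k\<close> by simp
  qed
  show "simp_op m k \<psi>"
    unfolding simp_op_def
  proof (intro conjI allI impI)
    show "\<psi> i \<le> k" if "i \<le> m" for i
      using hit that by blast
    show "\<psi> i \<le> \<psi> j" if ij: "i \<le> j \<and> j \<le> m" for i j
    proof (rule ccontr)
      assume "\<not> \<psi> i \<le> \<psi> j"
      moreover have hit_i: "b (\<psi> i) = a i \<and> \<psi> i \<le> k" and hit_j: "b (\<psi> j) = a j"
        using hit ij by auto
      ultimately have "b (\<psi> j) \<subseteq> b (\<psi> i)"
        using sdDelta_mono[OF b, of "\<psi> j" "\<psi> i"] by simp
      then have "a j \<subseteq> a i"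
        using hit_i hit_j by simp
      with sdDelta_mono[OF a] ij have "a i = a j"
        by blast
      with \<open>\<not> \<psi> i \<le> \<psi> j\<close> show False
        unfolding \<psi>_def by simp
    qed
  qed
  show "act (sdDelta n) m k \<psi> b = a"
  proof
    fix t
    show "act (sdDelta n) m k \<psi> b t = a t"
      using a hit by (cases "t \<le> m") (simp_all add: act_sdDelta cells_sdDelta_iff)
  qed
qed

definition sd_chain :: "nat \<Rightarrow> nat set set \<Rightarrow> bool" where
  "sd_chain n C \<longleftrightarrow> (\<exists>k. \<exists>c\<in>cells (sdDelta n) k. C = c ` {0..k})"

lemma sd_chain_image:
  assumes c: "c \<in> cells (sdDelta n) k" and "S \<noteq> {}" and "S \<subseteq> {0..k}"
  shows "sd_chain n (c ` S)"
proof -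
  obtain m \<theta> where \<theta>: "simp_op m k \<theta>" and S: "\<theta> ` {0..m} = S"
    using monotone_enumeration[OF \<open>S \<noteq> {}\<close> \<open>S \<subseteq> {0..k}\<close>] .
  have "act (sdDelta n) m k \<theta> c ` {0..m} = c ` S"
    unfolding S[symmetric] image_image by (auto simp: act_sdDelta)
  with act_sdDelta_cells[OF \<theta> c] show ?thesis
    unfolding sd_chain_def by metis
qed

definition chain_map :: "(nat \<Rightarrow> nat) \<Rightarrow> nat set set \<Rightarrow> nat set set" where
  "chain_map \<theta> C = image \<theta> ` C"

lemma chain_map_comp: "chain_map f (chain_map g C) = chain_map (f \<circ> g) C"
  by (simp add: chain_map_def image_image image_comp)

type_synonym 'v ex2_cell = "nat \<Rightarrow> (nat \<Rightarrow> nat set) \<Rightarrow> nat \<Rightarrow> (nat \<Rightarrow> nat set) \<Rightarrow> nat \<Rightarrow> 'v"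

definition ex2_simplex :: "nat \<Rightarrow> (nat set set \<Rightarrow> 'v) \<Rightarrow> 'v ex2_cell" where
  "ex2_simplex n \<phi> = (\<lambda>k c. if c \<in> cells (sdDelta n) k then
      (\<lambda>j d. if d \<in> cells (sdDelta k) j then (\<lambda>i. if i \<le> j then \<phi> (c ` d i) else undefined)
             else undefined)
    else undefined)"

lemma ex2_simplex_component:
  assumes c: "c \<in> cells (sdDelta n) k" and \<phi>: "\<And>C. sd_chain n C \<Longrightarrow> \<phi> C \<in> V"
  shows "sset_hom (sdDelta k) (cosk0 V) (ex2_simplex n \<phi> k c)"
  unfolding sset_hom_def
proof (intro conjI allI impI)
  fix j d assume "d \<in> cells (sdDelta k) j"
  then have "sd_chain n (c ` d i)" if "i \<le> j" for i
    using that by (intro sd_chain_image[OF c]) (auto simp: cells_sdDelta_iff)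
  with \<open>d \<in> cells (sdDelta k) j\<close> show "ex2_simplex n \<phi> k c j d \<in> cells (cosk0 V) j"
    using c \<phi> by (simp add: ex2_simplex_def cells_cosk0_iff)
next
  fix m j \<theta> d assume md: "simp_op m j \<theta> \<and> d \<in> cells (sdDelta k) j"
  then have "act (sdDelta k) m j \<theta> d \<in> cells (sdDelta k) m"
    using act_sdDelta_cells by blast
  with c md show "ex2_simplex n \<phi> k c m (act (sdDelta k) m j \<theta> d) =
      act (cosk0 V) m j \<theta> (ex2_simplex n \<phi> k c j d)"
    by (auto simp: ex2_simplex_def act_cosk0 act_sdDelta simp_op_def)
next
  fix j d assume "d \<notin> cells (sdDelta k) j"
  with c show "ex2_simplex n \<phi> k c j d = undefined"
    by (simp add: ex2_simplex_def)
qed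

lemma ex2_simplex_cells:
  assumes \<phi>: "\<And>C. sd_chain n C \<Longrightarrow> \<phi> C \<in> V"
  shows "ex2_simplex n \<phi> \<in> cells (Ex (Ex (cosk0 V))) n"
  unfolding cells_Ex_iff[where n = n] sset_hom_def
proof (intro conjI allI impI)
  fix k c assume "c \<in> cells (sdDelta n) k"
  then show "ex2_simplex n \<phi> k c \<in> cells (Ex (cosk0 V)) k"
    unfolding cells_Ex_iff using \<phi> by (rule ex2_simplex_component)
next
  fix m k \<theta> c assume mc: "simp_op m k \<theta> \<and> c \<in> cells (sdDelta n) k"
  then have ac: "act (sdDelta n) m k \<theta> c \<in> cells (sdDelta n) m"
    using act_sdDelta_cells by blast
  have \<theta>: "\<forall>t\<le>m. \<theta> t \<le> k"
    using mc by (simp add: simp_op_def)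
  show "ex2_simplex n \<phi> m (act (sdDelta n) m k \<theta> c) = act (Ex (cosk0 V)) m k \<theta> (ex2_simplex n \<phi> k c)"
  proof (intro ext)
    fix j d i
    show "ex2_simplex n \<phi> m (act (sdDelta n) m k \<theta> c) j d i =
        act (Ex (cosk0 V)) m k \<theta> (ex2_simplex n \<phi> k c) j d i"
    proof (cases "d \<in> cells (sdDelta m) j")
      case True
      have "(\<lambda>t. if t \<le> m then c (\<theta> t) else {}) ` d i = c ` sd_map \<theta> j d i" if "i \<le> j"
      proof -
        have "d i \<subseteq> {0..m}"
          using True that by (simp add: cells_sdDelta_iff)
        with that show ?thesis
          by (force simp: sd_map_def)
      qed
      with True ac mc sd_map_cells[OF \<theta> True] show ?thesis
        by (auto simp: ex2_simplex_def act_Ex act_sdDelta)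
    next
      case False
      with ac show ?thesis
        by (simp add: ex2_simplex_def act_Ex)
    qed
  qed
next
  fix k c assume "c \<notin> cells (sdDelta n) k"
  then show "ex2_simplex n \<phi> k c = undefined"
    by (simp add: ex2_simplex_def)
qed

lemma act_ex2_simplex:
  assumes \<theta>: "\<forall>t\<le>m. \<theta> t \<le> n"
  shows "act (Ex (Ex X)) m n \<theta> (ex2_simplex n \<phi>) = ex2_simplex m (\<phi> \<circ> chain_map \<theta>)"
proof (rule ext, rule ext)
  fix k c
  show "act (Ex (Ex X)) m n \<theta> (ex2_simplex n \<phi>) k c = ex2_simplex m (\<phi> \<circ> chain_map \<theta>) k c"
  proof (cases "c \<in> cells (sdDelta m) k")
    case True
    have "sd_map \<theta> k c ` d i = chain_map \<theta> (c ` d i)"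
      if "d \<in> cells (sdDelta k) j" "i \<le> j" for d i j
    proof -
      have "d i \<subseteq> {0..k}"
        using that by (simp add: cells_sdDelta_iff)
      then show ?thesis
        by (force simp: sd_map_def chain_map_def)
    qed
    with True sd_map_cells[OF \<theta> True] show ?thesis
      by (simp add: act_Ex ex2_simplex_def fun_eq_iff)
  next
    case False
    then show ?thesis
      by (simp add: ex2_simplex_def act_Ex)
  qed
qed

lemma ex2_simplex_cong:
  assumes "\<And>C. sd_chain n C \<Longrightarrow> \<phi> C = \<psi> C"
  shows "ex2_simplex n \<phi> = ex2_simplex n \<psi>"
proof -
  have "\<phi> (c ` d i) = \<psi> (c ` d i)"
    if "c \<in> cells (sdDelta n) k" "d \<in> cells (sdDelta k) j" "i \<le> j" for c k d j i
    using that by (intro assms sd_chain_image) (auto simp: cells_sdDelta_iff)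
  then show ?thesis
    unfolding ex2_simplex_def by (intro ext) simp
qed

lemma Ex_Ex_cosk0_component:
  assumes "F \<in> cells (Ex (Ex (cosk0 V))) n" and "c \<in> cells (sdDelta n) k"
  shows "sset_hom (sdDelta k) (cosk0 V) (F k c)"
  using assms unfolding cells_Ex_iff sset_hom_def by blast

lemma Ex_Ex_cosk0_at_vertex:
  assumes F: "F \<in> cells (Ex (Ex (cosk0 V))) n" and c: "c \<in> cells (sdDelta n) k"
    and d: "d \<in> cells (sdDelta k) j" and "i \<le> j"
  shows "F k c j d i = F k c 0 (sd_vertex (d i)) 0"
proof -
  have "simp_op 0 j (\<lambda>_. i)"
    using \<open>i \<le> j\<close> by (simp add: simp_op_def)
  with Ex_Ex_cosk0_component[OF F c] d
  have "F k c 0 (act (sdDelta k) 0 j (\<lambda>_. i) d) = act (cosk0 V) 0 j (\<lambda>_. i) (F k c j d)"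
    unfolding sset_hom_def by blast
  moreover have "act (sdDelta k) 0 j (\<lambda>_. i) d = sd_vertex (d i)"
    by (simp add: act_sdDelta sd_vertex_def)
  ultimately show ?thesis
    by (simp add: act_cosk0)
qed

lemma Ex_Ex_cosk0_vertex_act:
  assumes F: "F \<in> cells (Ex (Ex (cosk0 V))) n" and c: "c \<in> cells (sdDelta n) k"
    and \<theta>: "simp_op m k \<theta>" and "T \<noteq> {}" and "T \<subseteq> {0..m}"
  shows "F m (act (sdDelta n) m k \<theta> c) 0 (sd_vertex T) 0 = F k c 0 (sd_vertex (\<theta> ` T)) 0"
proof -
  have "F m (act (sdDelta n) m k \<theta> c) = act (Ex (cosk0 V)) m k \<theta> (F k c)"
    using F c \<theta> unfolding cells_Ex_iff[where n = n] sset_hom_def by blast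
  with sd_vertex_cells[OF \<open>T \<noteq> {}\<close> \<open>T \<subseteq> {0..m}\<close>] show ?thesis
    by (simp add: act_Ex sd_map_sd_vertex)
qed

lemma Ex_Ex_cosk0_vertex_cong:
  assumes F: "F \<in> cells (Ex (Ex (cosk0 V))) n" and c: "c \<in> cells (sdDelta n) k"
    and S: "S \<noteq> {}" "S \<subseteq> {0..k}" and S': "S' \<noteq> {}" "S' \<subseteq> {0..k}"
    and eq: "c ` S = c ` S'"
  shows "F k c 0 (sd_vertex S) 0 = F k c 0 (sd_vertex S') 0"
proof -
  define \<rho> where "\<rho> = (\<lambda>t. LEAST s. c s = c t)"
  have \<rho>: "simp_op k k \<rho>" and c_\<rho>: "act (sdDelta n) k k \<rho> c = c"
    using sdDelta_factor_least[OF c c] unfolding \<rho>_def by auto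
  \<comment> \<open>\<open>\<rho>\<close> retracts every index onto the least one with the same subset,
    so \<open>\<rho> ` S\<close> only depends on \<open>c ` S\<close>.\<close>
  have "\<rho> ` S = (\<lambda>X. LEAST s. c s = X) ` (c ` S)" "\<rho> ` S' = (\<lambda>X. LEAST s. c s = X) ` (c ` S')"
    unfolding \<rho>_def by auto
  then show ?thesis
    using Ex_Ex_cosk0_vertex_act[OF F c \<rho> S] Ex_Ex_cosk0_vertex_act[OF F c \<rho> S'] c_\<rho> eq by simp
qed

lemma Ex_Ex_cosk0_vertex_eq:
  assumes F: "F \<in> cells (Ex (Ex (cosk0 V))) n"
    and a: "a \<in> cells (sdDelta n) m" and b: "b \<in> cells (sdDelta n) k"
    and S: "S \<noteq> {}" "S \<subseteq> {0..k}" and eq: "a ` {0..m} = b ` S"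
  shows "F m a 0 (sd_vertex {0..m}) 0 = F k b 0 (sd_vertex S) 0"
proof -
  define \<psi> where "\<psi> = (\<lambda>t. LEAST s. b s = a t)"
  have "a ` {0..m} \<subseteq> b ` {0..k}"
    using eq S by auto
  then have \<psi>: "simp_op m k \<psi>" and b_\<psi>: "act (sdDelta n) m k \<psi> b = a"
    using sdDelta_factor_least[OF a b] unfolding \<psi>_def by auto
  have "b ` \<psi> ` {0..m} = a ` {0..m}"
    unfolding b_\<psi>[symmetric] by (auto simp: act_sdDelta)
  moreover have "\<psi> ` {0..m} \<subseteq> {0..k}"
    using \<psi> by (auto simp: simp_op_def)
  ultimately have "F k b 0 (sd_vertex (\<psi> ` {0..m})) 0 = F k b 0 (sd_vertex S) 0"
    using Ex_Ex_cosk0_vertex_cong[OF F b _ _ S] eq by simp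
  with Ex_Ex_cosk0_vertex_act[OF F b \<psi>, of "{0..m}"] b_\<psi> show ?thesis
    by simp
qed

definition ex2_value :: "nat \<Rightarrow> 'v ex2_cell \<Rightarrow> nat set set \<Rightarrow> 'v" where
  "ex2_value n F C =
    (SOME v. \<exists>k. \<exists>c\<in>cells (sdDelta n) k. C = c ` {0..k} \<and> v = F k c 0 (sd_vertex {0..k}) 0)"

lemma ex2_value_eq:
  assumes F: "F \<in> cells (Ex (Ex (cosk0 V))) n" and c: "c \<in> cells (sdDelta n) k"
    and S: "S \<noteq> {}" "S \<subseteq> {0..k}"
  shows "ex2_value n F (c ` S) = F k c 0 (sd_vertex S) 0"
  unfolding ex2_value_def
proof (rule someI2_ex)
  obtain k' c' where "c' \<in> cells (sdDelta n) k'" and "c ` S = c' ` {0..k'}"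
    using sd_chain_image[OF c S] unfolding sd_chain_def by blast
  then show "\<exists>v. \<exists>k'. \<exists>c'\<in>cells (sdDelta n) k'. c ` S = c' ` {0..k'} \<and>
      v = F k' c' 0 (sd_vertex {0..k'}) 0"
    by blast
next
  fix v assume "\<exists>k'. \<exists>c'\<in>cells (sdDelta n) k'. c ` S = c' ` {0..k'} \<and>
      v = F k' c' 0 (sd_vertex {0..k'}) 0"
  then show "v = F k c 0 (sd_vertex S) 0"
    using Ex_Ex_cosk0_vertex_eq[OF F _ c S] by auto
qed

lemma ex2_value_in:
  assumes F: "F \<in> cells (Ex (Ex (cosk0 V))) n" and "sd_chain n C"
  shows "ex2_value n F C \<in> V"
proof -
  obtain k c where c: "c \<in> cells (sdDelta n) k" and C: "C = c ` {0..k}"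
    using \<open>sd_chain n C\<close> unfolding sd_chain_def by blast
  have "F k c 0 (sd_vertex {0..k}) \<in> cells (cosk0 V) 0"
    using Ex_Ex_cosk0_component[OF F c] sd_vertex_cells[of "{0..k}" k]
    unfolding sset_hom_def by auto
  then show ?thesis
    unfolding C ex2_value_eq[OF F c, of "{0..k}", simplified] by (simp add: cells_cosk0_iff)
qed

lemma ex2_value_ex2_simplex:
  assumes "sd_chain n C"
  shows "ex2_value n (ex2_simplex n \<phi>) C = \<phi> C"
  unfolding ex2_value_def
proof (rule someI2_ex)
  show "\<exists>v. \<exists>k. \<exists>c\<in>cells (sdDelta n) k. C = c ` {0..k} \<and>
      v = ex2_simplex n \<phi> k c 0 (sd_vertex {0..k}) 0"
    using assms unfolding sd_chain_def by blast
next
  fix v assume "\<exists>k. \<exists>c\<in>cells (sdDelta n) k. C = c ` {0..k} \<and>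
      v = ex2_simplex n \<phi> k c 0 (sd_vertex {0..k}) 0"
  then show "v = \<phi> C"
    by (auto simp: ex2_simplex_def sd_vertex_def cells_sdDelta_iff)
qed

lemma ex2_simplex_ex2_value:
  assumes F: "F \<in> cells (Ex (Ex (cosk0 V))) n"
  shows "ex2_simplex n (ex2_value n F) = F"
proof (intro ext)
  fix k c j d i
  show "ex2_simplex n (ex2_value n F) k c j d i = F k c j d i"
  proof (cases "c \<in> cells (sdDelta n) k \<and> d \<in> cells (sdDelta k) j")
    case False
    moreover have "F k c = undefined" if "c \<notin> cells (sdDelta n) k"
      using F that unfolding cells_Ex_iff[where n = n] sset_hom_def by blast
    moreover have "F k c j d = undefined" if "c \<in> cells (sdDelta n) k" "d \<notin> cells (sdDelta k) j"
      using Ex_Ex_cosk0_component[OF F that(1)] that(2) unfolding sset_hom_def by blast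
    ultimately show ?thesis
      by (auto simp: ex2_simplex_def)
  next
    case True
    then have c: "c \<in> cells (sdDelta n) k" and d: "d \<in> cells (sdDelta k) j"
      by auto
    show ?thesis
    proof (cases "i \<le> j")
      case True
      then have "d i \<noteq> {}" "d i \<subseteq> {0..k}"
        using d by (auto simp: cells_sdDelta_iff)
      with True c d show ?thesis
        by (simp add: ex2_simplex_def ex2_value_eq[OF F c] Ex_Ex_cosk0_at_vertex[OF F c d])
    next
      case False
      have "F k c j d \<in> cells (cosk0 V) j"
        using Ex_Ex_cosk0_component[OF F c] d unfolding sset_hom_def by blast
      with False c d show ?thesis
        by (simp add: ex2_simplex_def cells_cosk0_iff)
    qed
  qed
qed

lemma ex2_value_act:
  assumes "F \<in> cells (Ex (Ex (cosk0 V))) n" and "\<forall>t\<le>m. \<theta> t \<le> n" and "sd_chain m D"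
  shows "ex2_value m (act (Ex (Ex (cosk0 V))) m n \<theta> F) D = ex2_value n F (chain_map \<theta> D)"
proof -
  have "act (Ex (Ex (cosk0 V))) m n \<theta> F = ex2_simplex m (ex2_value n F \<circ> chain_map \<theta>)"
    using act_ex2_simplex[OF assms(2)] ex2_simplex_ex2_value[OF assms(1)] by metis
  with ex2_value_ex2_simplex[OF assms(3), of "ex2_value n F \<circ> chain_map \<theta>"] show ?thesis
    by simp
qed

lemma coface_neq: "coface a t \<noteq> a"
  by (simp add: coface_def)

lemma range_coface: "range (coface a) = - {a}"
proof (intro equalityI subsetI)
  fix x assume "x \<in> - {a}"
  then have "coface a (if x < a then x else x - 1) = x"
    by (auto simp: coface_def)
  then show "x \<in> range (coface a)"
    by (metis rangeI)
qed (auto simp: coface_neq)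

lemma inj_coface: "inj (coface a)"
  by (rule injI) (auto simp: coface_def split: if_splits)

lemma coface_coface: "a < b \<Longrightarrow> coface b (coface a t) = coface a (coface (b - 1) t)"
  by (auto simp: coface_def)

lemma coface_bounded: "1 \<le> n \<Longrightarrow> \<forall>t\<le>n - 1. coface i t \<le> n"
proof (intro allI impI)
  fix t assume "1 \<le> n" "t \<le> n - 1"
  then have "Suc t \<le> n"
    by simp
  then show "coface i t \<le> n"
    by (simp add: coface_def)
qed

lemma chain_map_coface_inject: "chain_map (coface a) D = chain_map (coface a) D' \<Longrightarrow> D = D'"
proof -
  have "inj (image (coface a))"
    using inj_on_image_Pow[OF inj_coface[of a]] by simp
  then show "chain_map (coface a) D = chain_map (coface a) D' \<Longrightarrow> D = D'"
    unfolding chain_map_def by (simp add: inj_image_eq_iff)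
qed

lemma notin_chain_map_coface: "T \<in> chain_map (coface a) D \<Longrightarrow> a \<notin> T"
  unfolding chain_map_def by (auto simp: coface_neq[symmetric])

lemma sd_chain_avoiding:
  assumes "sd_chain n C" and "a \<le> n" and avoid: "\<forall>T\<in>C. a \<notin> T"
  obtains D where "sd_chain (n - 1) D" and "C = chain_map (coface a) D"
proof -
  obtain k c where c: "c \<in> cells (sdDelta n) k" and C: "C = c ` {0..k}"
    using assms(1) unfolding sd_chain_def by blast
  define c' where "c' t = (if t \<le> k then coface a -` c t else {})" for t
  have c_c': "coface a ` c' t = c t" if "t \<le> k" for t
  proof -
    have "a \<notin> c t"
      using avoid C that by auto
    with that show ?thesis
      by (auto simp: c'_def image_vimage_eq range_coface)
  qed
  have "c' \<in> cells (sdDelta (n - 1)) k"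
    unfolding cells_sdDelta_iff
  proof (intro conjI allI impI)
    fix t assume "t \<le> k"
    then show "c' t \<noteq> {}"
      using c c_c'[of t] by (auto simp: cells_sdDelta_iff)
    show "c' t \<subseteq> {0..n - 1}"
    proof
      fix u assume "u \<in> c' t"
      moreover have "c t \<subseteq> {0..n}"
        using c \<open>t \<le> k\<close> by (simp add: cells_sdDelta_iff)
      ultimately have "coface a u \<le> n"
        using \<open>t \<le> k\<close> by (auto simp: c'_def)
      with \<open>a \<le> n\<close> show "u \<in> {0..n - 1}"
        by (auto simp: coface_def split: if_splits)
    qed
  next
    fix i j assume "i \<le> j \<and> j \<le> k"
    then show "c' i \<subseteq> c' j"
      using sdDelta_mono[OF c] by (auto simp: c'_def)
  qed (simp add: c'_def)
  moreover have "C = chain_map (coface a) (c' ` {0..k})"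
    unfolding C chain_map_def image_image using c_c' by simp
  ultimately show thesis
    using that unfolding sd_chain_def by blast
qed

lemma Ex_Ex_cosk0_horn_values_agree:
  assumes x: "x \<in> cells (Ex (Ex (cosk0 V))) m" and y: "y \<in> cells (Ex (Ex (cosk0 V))) m"
    and "1 \<le> m" and "i < j" and "j \<le> Suc m"
    and faces: "face (Ex (Ex (cosk0 V))) m i y = face (Ex (Ex (cosk0 V))) m (j - 1) x"
    and D: "sd_chain m D" and D': "sd_chain m D'"
    and eq: "chain_map (coface i) D = chain_map (coface j) D'"
  shows "ex2_value m x D = ex2_value m y D'"
proof -
  \<comment> \<open>\<open>D\<close> lies in the face \<open>j - 1\<close>, because \<open>coface i\<close> sends \<open>j - 1\<close> to \<open>j\<close>, which the right-hand side avoids.\<close>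
  have "\<forall>T\<in>D. j - 1 \<notin> T"
  proof (intro ballI notI)
    fix T assume "T \<in> D" and "j - 1 \<in> T"
    moreover have "coface i (j - 1) = j"
      using \<open>i < j\<close> by (simp add: coface_def)
    ultimately have "j \<in> coface i ` T"
      by (metis imageI)
    moreover have "coface i ` T \<in> chain_map (coface j) D'"
      using \<open>T \<in> D\<close> eq[symmetric] by (simp add: chain_map_def)
    ultimately show False
      using notin_chain_map_coface by blast
  qed
  moreover have "j - 1 \<le> m"
    using \<open>j \<le> Suc m\<close> by simp
  ultimately obtain E where E: "sd_chain (m - 1) E" and D_E: "D = chain_map (coface (j - 1)) E"
    using sd_chain_avoiding[OF D] by blast
  have "chain_map (coface j) (chain_map (coface i) E) = chain_map (coface j) D'"
    using eq unfolding D_E chain_map_comp by (simp add: comp_def coface_coface[OF \<open>i < j\<close>])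
  then have E_D': "chain_map (coface i) E = D'"
    by (rule chain_map_coface_inject)
  have "ex2_value m y D' = ex2_value (m - 1) (face (Ex (Ex (cosk0 V))) m i y) E"
    unfolding face_def E_D'[symmetric] using ex2_value_act[OF y coface_bounded[OF \<open>1 \<le> m\<close>] E] ..
  also have "\<dots> = ex2_value m x D"
    unfolding faces unfolding face_def D_E using ex2_value_act[OF x coface_bounded[OF \<open>1 \<le> m\<close>] E] .
  finally show ?thesis ..
qed

lemma Ex_Ex_cosk0_horn_values_consistent:
  assumes "k \<le> n"
    and x: "\<And>i. i \<le> n \<Longrightarrow> i \<noteq> k \<Longrightarrow> x i \<in> cells (Ex (Ex (cosk0 V))) (n - 1)"
    and compatible: "\<And>i j. i < j \<Longrightarrow> j \<le> n \<Longrightarrow> i \<noteq> k \<Longrightarrow> j \<noteq> k \<Longrightarrow>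
      face (Ex (Ex (cosk0 V))) (n - 1) i (x j) = face (Ex (Ex (cosk0 V))) (n - 1) (j - 1) (x i)"
    and "i \<le> n" "i \<noteq> k" "j \<le> n" "j \<noteq> k"
    and "sd_chain (n - 1) D" "sd_chain (n - 1) D'"
    and "chain_map (coface i) D = chain_map (coface j) D'"
  shows "ex2_value (n - 1) (x i) D = ex2_value (n - 1) (x j) D'"
proof -
  have ordered: "ex2_value (n - 1) (x i) D = ex2_value (n - 1) (x j) D'"
    if "i < j" "j \<le> n" "i \<noteq> k" "j \<noteq> k" and D: "sd_chain (n - 1) D" "sd_chain (n - 1) D'"
      and eq: "chain_map (coface i) D = chain_map (coface j) D'" for i j D D'
  proof -
    have "1 \<le> n - 1"
      using that \<open>k \<le> n\<close> by linarith
    moreover have "j \<le> Suc (n - 1)"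
      using that by simp
    ultimately show ?thesis
      using Ex_Ex_cosk0_horn_values_agree[OF x x _ \<open>i < j\<close> _ compatible D eq] that by simp
  qed
  show ?thesis
  proof (cases i j rule: linorder_cases)
    case equal
    with assms show ?thesis
      using chain_map_coface_inject by metis
  qed (use assms ordered in \<open>metis\<close>)+
qed

lemma Ex_Ex_cosk0_horn_filler:
  assumes "V \<noteq> {}" and "1 \<le> n" and "k \<le> n"
    and x: "\<And>i. i \<le> n \<Longrightarrow> i \<noteq> k \<Longrightarrow> x i \<in> cells (Ex (Ex (cosk0 V))) (n - 1)"
    and compatible: "\<And>i j. i < j \<Longrightarrow> j \<le> n \<Longrightarrow> i \<noteq> k \<Longrightarrow> j \<noteq> k \<Longrightarrow>
      face (Ex (Ex (cosk0 V))) (n - 1) i (x j) = face (Ex (Ex (cosk0 V))) (n - 1) (j - 1) (x i)"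
  obtains y where "y \<in> cells (Ex (Ex (cosk0 V))) n"
    and "\<And>i. i \<le> n \<Longrightarrow> i \<noteq> k \<Longrightarrow> face (Ex (Ex (cosk0 V))) n i y = x i"
proof -
  define in_face where
    "in_face C i D \<longleftrightarrow> i \<le> n \<and> i \<noteq> k \<and> sd_chain (n - 1) D \<and> C = chain_map (coface i) D"
    for C i D
  have agree: "ex2_value (n - 1) (x i) D = ex2_value (n - 1) (x j) D'"
    if "in_face C i D" "in_face C j D'" for C i j D D'
    using that unfolding in_face_def
    by (intro Ex_Ex_cosk0_horn_values_consistent[where V = V and k = k] \<open>k \<le> n\<close> x compatible) auto
  define \<phi> where
    "\<phi> C = (SOME v. v \<in> V \<and> (\<forall>i D. in_face C i D \<longrightarrow> v = ex2_value (n - 1) (x i) D))" for C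
  have \<phi>: "\<phi> C \<in> V \<and> (\<forall>i D. in_face C i D \<longrightarrow> \<phi> C = ex2_value (n - 1) (x i) D)" for C
    unfolding \<phi>_def
  proof (rule someI_ex)
    show "\<exists>v. v \<in> V \<and> (\<forall>i D. in_face C i D \<longrightarrow> v = ex2_value (n - 1) (x i) D)"
    proof (cases "\<exists>i D. in_face C i D")
      case True
      then obtain i D where "in_face C i D"
        by blast
      then have "ex2_value (n - 1) (x i) D \<in> V"
        unfolding in_face_def using x ex2_value_in by blast
      with \<open>in_face C i D\<close> agree show ?thesis
        by blast
    qed (use \<open>V \<noteq> {}\<close> in blast)
  qed
  show thesis
  proof
    show "ex2_simplex n \<phi> \<in> cells (Ex (Ex (cosk0 V))) n"
      using \<phi> by (intro ex2_simplex_cells) blast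
  next
    fix i assume i: "i \<le> n" "i \<noteq> k"
    have "face (Ex (Ex (cosk0 V))) n i (ex2_simplex n \<phi>) = ex2_simplex (n - 1) (\<phi> \<circ> chain_map (coface i))"
      unfolding face_def using act_ex2_simplex coface_bounded[OF \<open>1 \<le> n\<close>] .
    also have "\<dots> = ex2_simplex (n - 1) (ex2_value (n - 1) (x i))"
      using \<phi> i by (intro ex2_simplex_cong) (simp add: in_face_def)
    also have "\<dots> = x i"
      using ex2_simplex_ex2_value x i by blast
    finally show "face (Ex (Ex (cosk0 V))) n i (ex2_simplex n \<phi>) = x i" .
  qed
qed

lemma kan_Ex_Ex_cosk0:
  assumes "V \<noteq> {}"
  shows "kan (Ex (Ex (cosk0 V)))"
  unfolding kan_def
proof (intro allI impI, elim conjE)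
  fix n k x
  assume "1 \<le> n" "k \<le> n"
    and "\<forall>i\<le>n. i \<noteq> k \<longrightarrow> x i \<in> cells (Ex (Ex (cosk0 V))) (n - 1)"
    and "\<forall>i j. i < j \<and> j \<le> n \<and> i \<noteq> k \<and> j \<noteq> k \<longrightarrow>
      face (Ex (Ex (cosk0 V))) (n - 1) i (x j) = face (Ex (Ex (cosk0 V))) (n - 1) (j - 1) (x i)"
  with assms obtain y where "y \<in> cells (Ex (Ex (cosk0 V))) n"
    and "\<And>i. i \<le> n \<Longrightarrow> i \<noteq> k \<Longrightarrow> face (Ex (Ex (cosk0 V))) n i y = x i"
    using Ex_Ex_cosk0_horn_filler[of V n k x] by blast
  then show "\<exists>y\<in>cells (Ex (Ex (cosk0 V))) n. \<forall>i\<le>n. i \<noteq> k \<longrightarrow> face (Ex (Ex (cosk0 V))) n i y = x i"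
    by blast
qed

theorem lemma6p5:
  fixes n :: nat
  assumes "n \<ge> 1"
  shows "kan (Ex (Ex (Sing (clique (Kgraph n)))))"
  unfolding Sing_clique_Kgraph using assms by (intro kan_Ex_Ex_cosk0) auto

end
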